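(* Let $n\ge d$ and let $\mathcal{M}$ be a linkage $(n,d)$-matching field. Then the flip graph of $\mathcal{M}$ has exactly $\binom{n}{d+1}\cdot d$ edges.
   Context: $L=\{\ell_1,\dots,\ell_n\}$, $R=\{r_1,\dots,r_d\}$. An $(n,d)$-matching field $\mathcal{M}=(M_\sigma)$ assigns to each $d$-subset $\sigma\subseteq L$ a perfect matching $M_\sigma$ between $\sigma$ and $R$; it is linkage if for every $r_i\in R$ and every $(d+1)$-subset $\tau\subseteq L$ there exist distinct $\ell_j,\ell_{j'}\in\tau$ with $M_{\tau\setminus\{\ell_j\}}$ and $M_{\tau\setminus\{\ell_{j'}\}}$ agreeing everywhere except on the edges incident with $r_i$. The flip graph of $\mathcal{M}$ has the matchings $M_\sigma$ as nodes, two matchings being adjacent if and only if they differ in exactly one edge (i.e. agree everywhere except on the edge incident with a single right node). *)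

theory Defs
  imports Main
begin

text \<open>Left nodes: L = {0..<n} (l_j is j), right nodes: R = {0..<d} (r_i is i).
  A matching is a set of edges (l, r).\<close>

definition perfect_matching :: "nat set \<Rightarrow> nat set \<Rightarrow> (nat \<times> nat) set \<Rightarrow> bool" where
  "perfect_matching S R M \<longleftrightarrow> M \<subseteq> S \<times> R
     \<and> (\<forall>l\<in>S. \<exists>!r. (l, r) \<in> M) \<and> (\<forall>r\<in>R. \<exists>!l. (l, r) \<in> M)"

text \<open>An (n,d)-matching field: every d-subset sigma of L gets a perfect matching M sigma
  between sigma and R (values on other sets are irrelevant).\<close>
definition matching_field :: "nat \<Rightarrow> nat \<Rightarrow> (nat set \<Rightarrow> (nat \<times> nat) set) \<Rightarrow> bool" where
  "matching_field n d M \<longleftrightarrow>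
     (\<forall>\<sigma>. \<sigma> \<subseteq> {..<n} \<and> card \<sigma> = d \<longrightarrow> perfect_matching \<sigma> {..<d} (M \<sigma>))"

definition agree_except :: "nat \<Rightarrow> (nat \<times> nat) set \<Rightarrow> (nat \<times> nat) set \<Rightarrow> bool" where
  "agree_except r M1 M2 \<longleftrightarrow> {e \<in> M1. snd e \<noteq> r} = {e \<in> M2. snd e \<noteq> r}"

definition linkage :: "nat \<Rightarrow> nat \<Rightarrow> (nat set \<Rightarrow> (nat \<times> nat) set) \<Rightarrow> bool" where
  "linkage n d M \<longleftrightarrow>
     (\<forall>r\<in>{..<d}. \<forall>\<tau>. \<tau> \<subseteq> {..<n} \<and> card \<tau> = d + 1 \<longrightarrow>
        (\<exists>j\<in>\<tau>. \<exists>j'\<in>\<tau>. j \<noteq> j' \<and> agree_except r (M (\<tau> - {j})) (M (\<tau> - {j'}))))"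

text \<open>Flip graph: nodes are the matchings M sigma; two are adjacent iff they differ in
  exactly one edge, i.e. they are distinct and agree except at a single right node.\<close>
definition flip_adjacent :: "nat \<Rightarrow> (nat \<times> nat) set \<Rightarrow> (nat \<times> nat) set \<Rightarrow> bool" where
  "flip_adjacent d M1 M2 \<longleftrightarrow> M1 \<noteq> M2 \<and> (\<exists>r\<in>{..<d}. agree_except r M1 M2)"

definition flip_graph_nodes :: "nat \<Rightarrow> nat \<Rightarrow> (nat set \<Rightarrow> (nat \<times> nat) set) \<Rightarrow> (nat \<times> nat) set set" where
  "flip_graph_nodes n d M = M ` {\<sigma>. \<sigma> \<subseteq> {..<n} \<and> card \<sigma> = d}"

definition flip_graph_edges :: "nat \<Rightarrow> nat \<Rightarrow> (nat set \<Rightarrow> (nat \<times> nat) set) \<Rightarrow> (nat \<times> nat) set set set" where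
  "flip_graph_edges n d M =
     {{A, B} | A B. A \<in> flip_graph_nodes n d M \<and> B \<in> flip_graph_nodes n d M \<and> flip_adjacent d A B}"

end

theory Submission
  imports Defs
begin

text \<open>Fix a (d+1)-set \<tau> of left nodes and write N x = M(\<tau> - {x}). Call {a, b} \<subseteq> \<tau> an
  r-pair if N a and N b agree except at the right node r; then (b, r) \<in> N a and (a, r) \<in> N b.
  Partition \<tau> according to the part of N x avoiding a set S of right nodes. When r is added
  to S, each r-pair merges two classes, and distinct r-pairs involve distinct classes, so the
  number of classes drops by at least the number of r-pairs. Going from at most d+1 classes to
  at least one, the d right nodes have at most d pairs altogether; linkage gives each at least
  one, hence exactly one. Adjacent matchings M \<sigma>, M \<sigma>' are N a, N b for the r-pair of
  \<tau> = \<sigma> \<union> \<sigma>', where r is the right node at which they differ, so the flip edges correspond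
  bijectively to the pairs (\<tau>, r) with |\<tau>| = d+1 and r < d.\<close>

lemma perfect_matching_subset: "perfect_matching S R A \<Longrightarrow> (l, r) \<in> A \<Longrightarrow> l \<in> S \<and> r \<in> R"
  by (auto simp: perfect_matching_def)

lemma perfect_matching_left_unique:
  "perfect_matching S R A \<Longrightarrow> (l, r) \<in> A \<Longrightarrow> (l, r') \<in> A \<Longrightarrow> r = r'"
  unfolding perfect_matching_def by blast

lemma perfect_matching_right_unique:
  "perfect_matching S R A \<Longrightarrow> (l, r) \<in> A \<Longrightarrow> (l', r) \<in> A \<Longrightarrow> l = l'"
  unfolding perfect_matching_def by blast

lemma perfect_matching_left_total: "perfect_matching S R A \<Longrightarrow> l \<in> S \<Longrightarrow> \<exists>r. (l, r) \<in> A"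
  unfolding perfect_matching_def by blast

lemma perfect_matching_right_total: "perfect_matching S R A \<Longrightarrow> r \<in> R \<Longrightarrow> \<exists>l. (l, r) \<in> A"
  unfolding perfect_matching_def by blast

lemma perfect_matching_fst_image: "perfect_matching S R A \<Longrightarrow> fst ` A = S"
  unfolding perfect_matching_def by force

lemma perfect_matching_split_right:
  assumes "perfect_matching S R A" "(a, r) \<in> A"
  shows "A = insert (a, r) {e \<in> A. snd e \<noteq> r}"
proof (rule set_eqI)
  fix e
  show "e \<in> A \<longleftrightarrow> e \<in> insert (a, r) {e \<in> A. snd e \<noteq> r}"
    using assms perfect_matching_right_unique[OF assms, of "fst e"] by (cases e) auto
qed

lemma agree_except_sym: "agree_except r A B \<Longrightarrow> agree_except r B A"
  by (simp add: agree_except_def)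

lemma agree_exceptD: "agree_except r A B \<Longrightarrow> e \<in> A \<Longrightarrow> snd e \<noteq> r \<Longrightarrow> e \<in> B"
  unfolding agree_except_def by blast

lemma adjacent_matchings_exchange:
  assumes pA: "perfect_matching \<sigma> R A" and pB: "perfect_matching \<sigma>' R B"
    and "r \<in> R" and agree: "agree_except r A B" and "A \<noteq> B"
  obtains a b where "a \<in> \<sigma>" "b \<notin> \<sigma>" "\<sigma>' = insert b (\<sigma> - {a})"
    "snd ` ((A \<union> B) - (A \<inter> B)) = {r}"
proof -
  define X where "X = {e \<in> A. snd e \<noteq> r}"
  obtain a where a: "(a, r) \<in> A" using perfect_matching_right_total[OF pA \<open>r \<in> R\<close>] ..
  obtain b where b: "(b, r) \<in> B" using perfect_matching_right_total[OF pB \<open>r \<in> R\<close>] ..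
  have A: "A = insert (a, r) X"
    using perfect_matching_split_right[OF pA a] unfolding X_def .
  have "X = {e \<in> B. snd e \<noteq> r}" using agree unfolding X_def agree_except_def .
  then have B: "B = insert (b, r) X"
    using perfect_matching_split_right[OF pB b] by simp
  have "a \<noteq> b" using A B \<open>A \<noteq> B\<close> by auto
  have "a \<notin> fst ` X" "b \<notin> fst ` X"
    using perfect_matching_left_unique[OF pA a] perfect_matching_left_unique[OF pB b] A B
    unfolding X_def by force+
  moreover have "\<sigma> = insert a (fst ` X)" "\<sigma>' = insert b (fst ` X)"
    using perfect_matching_fst_image[OF pA] perfect_matching_fst_image[OF pB] A B by auto
  moreover have "(A \<union> B) - (A \<inter> B) = {(a, r), (b, r)}"
    using A B \<open>a \<noteq> b\<close> unfolding X_def by auto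
  ultimately show thesis using \<open>a \<noteq> b\<close> by (intro that[of a b]) auto
qed

definition flip_label :: "(nat \<times> nat) set set \<Rightarrow> nat set \<times> nat set" where
  "flip_label e = (fst ` \<Union>e, snd ` (\<Union>e - \<Inter>e))"

lemma flip_label_adjacent:
  assumes "perfect_matching \<sigma> R A" "perfect_matching \<sigma>' R B"
    and "r \<in> R" "agree_except r A B" "A \<noteq> B"
  shows "flip_label {A, B} = (\<sigma> \<union> \<sigma>', {r})"
proof -
  obtain a b where "snd ` ((A \<union> B) - (A \<inter> B)) = {r}"
    using adjacent_matchings_exchange[OF assms] .
  then show ?thesis using perfect_matching_fst_image[OF assms(1)]
      perfect_matching_fst_image[OF assms(2)]
    by (simp add: flip_label_def image_Un)
qed

lemma card_image_add_card_le:
  assumes "finite A" "D \<subseteq> A" "\<forall>y\<in>D. \<exists>z\<in>A - D. h z = h y"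
  shows "card (h ` A) + card D \<le> card A"
proof -
  have "h ` A = h ` (A - D)" using assms(3) by (auto simp: image_iff) (metis Diff_iff)
  then have "card (h ` A) \<le> card (A - D)" by (simp add: card_image_le assms(1))
  also have "\<dots> = card A - card D" using assms by (simp add: card_Diff_subset finite_subset)
  finally show ?thesis using card_mono[OF assms(1,2)] by linarith
qed

definition edges_avoiding :: "nat set \<Rightarrow> (nat \<times> nat) set \<Rightarrow> (nat \<times> nat) set" where
  "edges_avoiding S A = {e \<in> A. snd e \<notin> S}"

definition agreeing_pairs :: "nat set \<Rightarrow> (nat \<Rightarrow> (nat \<times> nat) set) \<Rightarrow> nat \<Rightarrow> (nat \<times> nat) set" where
  "agreeing_pairs \<tau> N r = {(a, b). a \<in> \<tau> \<and> b \<in> \<tau> \<and> a < b \<and> agree_except r (N a) (N b)}"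

lemma agreeing_pairs_min_max:
  assumes "a \<in> \<tau>" "b \<in> \<tau>" "a \<noteq> b" "agree_except r (N a) (N b)"
  shows "(min a b, max a b) \<in> agreeing_pairs \<tau> N r"
  using assms agree_except_sym[OF assms(4)] by (auto simp: agreeing_pairs_def min_def max_def)

locale deletion_matchings =
  fixes \<tau> R :: "nat set" and N :: "nat \<Rightarrow> (nat \<times> nat) set"
  assumes finite_\<tau>: "finite \<tau>"
    and perfect_matching_N: "x \<in> \<tau> \<Longrightarrow> perfect_matching (\<tau> - {x}) R (N x)"
begin

abbreviation classes :: "nat set \<Rightarrow> (nat \<times> nat) set set" where
  "classes S \<equiv> (\<lambda>x. edges_avoiding S (N x)) ` \<tau>"

lemma agree_except_partner:
  assumes "a \<in> \<tau>" "b \<in> \<tau>" "a \<noteq> b" "agree_except r (N a) (N b)"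
  shows "(b, r) \<in> N a"
proof -
  obtain t where t: "(b, t) \<in> N a"
    using perfect_matching_left_total[OF perfect_matching_N[OF \<open>a \<in> \<tau>\<close>]] assms(2,3) by blast
  have "(b, t) \<notin> N b" using perfect_matching_subset[OF perfect_matching_N[OF \<open>b \<in> \<tau>\<close>]] by blast
  with t show ?thesis using agree_exceptD[OF assms(4) t] by (cases "t = r") auto
qed

lemma agreeing_pairD:
  assumes "(a, b) \<in> agreeing_pairs \<tau> N r"
  shows "a \<in> \<tau>" "b \<in> \<tau>" "a < b" "(b, r) \<in> N a" "(a, r) \<in> N b"
proof -
  have ab: "a \<in> \<tau>" "b \<in> \<tau>" "a < b" and agree: "agree_except r (N a) (N b)"
    using assms by (simp_all add: agreeing_pairs_def)
  then show "a \<in> \<tau>" "b \<in> \<tau>" "a < b" by simp_all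
  have "a \<noteq> b" "b \<noteq> a" using ab(3) by simp_all
  then show "(b, r) \<in> N a" "(a, r) \<in> N b"
    using agree_except_partner[OF ab(1,2) _ agree] agree_except_partner[OF ab(2,1) _ agree_except_sym[OF agree]]
    by simp_all
qed

lemma mutual_partners_unique:
  assumes "r \<notin> S" "x' \<in> \<tau>" "y \<in> \<tau>"
    and "(y, r) \<in> N x" "(x, r) \<in> N y" "(y', r) \<in> N x'" "(x', r) \<in> N y'"
    and "edges_avoiding S (N x) = edges_avoiding S (N x')"
  shows "x = x' \<and> y = y'"
proof -
  have "(y, r) \<in> edges_avoiding S (N x)" using assms(1,4) by (simp add: edges_avoiding_def)
  then have "(y, r) \<in> N x'" unfolding assms(8) by (simp add: edges_avoiding_def)
  then have "y = y'"
    by (rule perfect_matching_right_unique[OF perfect_matching_N[OF \<open>x' \<in> \<tau>\<close>] _ assms(6)])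
  moreover have "x = x'"
    using perfect_matching_right_unique[OF perfect_matching_N[OF \<open>y \<in> \<tau>\<close>] assms(5)] assms(7) \<open>y = y'\<close>
    by simp
  ultimately show ?thesis by simp
qed

lemma card_classes_insert:
  assumes "r \<notin> S"
  shows "card (classes (insert r S)) + card (agreeing_pairs \<tau> N r) \<le> card (classes S)"
proof -
  let ?first = "\<lambda>p. edges_avoiding S (N (fst p))"
  let ?D = "?first ` agreeing_pairs \<tau> N r"
  have inj: "inj_on ?first (agreeing_pairs \<tau> N r)"
  proof (rule inj_onI, clarify)
    fix a b a' b'
    assume p: "(a, b) \<in> agreeing_pairs \<tau> N r" and q: "(a', b') \<in> agreeing_pairs \<tau> N r"
      and "?first (a, b) = ?first (a', b')"
    then show "a = a' \<and> b = b'"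
      using mutual_partners_unique[OF assms agreeing_pairD(1)[OF q] agreeing_pairD(2)[OF p]
          agreeing_pairD(4,5)[OF p] agreeing_pairD(4,5)[OF q]]
      by simp
  qed
  have second_not_first: "edges_avoiding S (N b) \<notin> ?D"
    if "(a, b) \<in> agreeing_pairs \<tau> N r" for a b
  proof
    assume "edges_avoiding S (N b) \<in> ?D"
    then obtain a' b' where a'b': "(a', b') \<in> agreeing_pairs \<tau> N r"
      "edges_avoiding S (N b) = edges_avoiding S (N a')" by auto
    then have "b = a' \<and> a = b'"
      using mutual_partners_unique[OF assms agreeing_pairD(1)[OF a'b'(1)] agreeing_pairD(1)[OF that]
          agreeing_pairD(5,4)[OF that] agreeing_pairD(4,5)[OF a'b'(1)]]
      by simp
    then show False using agreeing_pairD(3)[OF that] agreeing_pairD(3)[OF a'b'(1)] by simp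
  qed
  have "\<forall>C\<in>?D. \<exists>C'\<in>classes S - ?D. edges_avoiding {r} C' = edges_avoiding {r} C"
  proof
    fix C assume "C \<in> ?D"
    then obtain a b where ab: "(a, b) \<in> agreeing_pairs \<tau> N r" "C = edges_avoiding S (N a)"
      by auto
    then have "edges_avoiding {r} (edges_avoiding S (N b)) = edges_avoiding {r} C"
      unfolding agreeing_pairs_def agree_except_def edges_avoiding_def by blast
    then show "\<exists>C'\<in>classes S - ?D. edges_avoiding {r} C' = edges_avoiding {r} C"
      using second_not_first[OF ab(1)] agreeing_pairD(2)[OF ab(1)] by blast
  qed
  then have "card (edges_avoiding {r} ` classes S) + card ?D \<le> card (classes S)"
    by (intro card_image_add_card_le) (auto simp: finite_\<tau> agreeing_pairs_def)
  moreover have "edges_avoiding {r} ` classes S = classes (insert r S)"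
    by (auto simp: edges_avoiding_def image_image)
  ultimately show ?thesis using card_image[OF inj] by simp
qed

lemma card_classes_add_sum_le:
  assumes "finite S"
  shows "card (classes S) + (\<Sum>r\<in>S. card (agreeing_pairs \<tau> N r)) \<le> card \<tau>"
  using assms
proof (induction S rule: finite_induct)
  case empty
  show ?case using card_image_le[OF finite_\<tau>] by simp
next
  case (insert r S)
  then show ?case using card_classes_insert[of r S] by simp
qed

lemma card_agreeing_pairs_eq_1:
  assumes "finite R" "card \<tau> = Suc (card R)"
    and linked: "\<And>r. r \<in> R \<Longrightarrow> \<exists>a\<in>\<tau>. \<exists>b\<in>\<tau>. a \<noteq> b \<and> agree_except r (N a) (N b)"
    and "r \<in> R"
  shows "card (agreeing_pairs \<tau> N r) = 1"
proof (rule ccontr)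
  assume "card (agreeing_pairs \<tau> N r) \<noteq> 1"
  have fin: "finite (agreeing_pairs \<tau> N r')" for r'
    by (rule finite_subset[of _ "\<tau> \<times> \<tau>"]) (auto simp: agreeing_pairs_def finite_\<tau>)
  have ge1: "1 \<le> card (agreeing_pairs \<tau> N r')" if r': "r' \<in> R" for r'
  proof -
    obtain a b where "a \<in> \<tau>" "b \<in> \<tau>" "a \<noteq> b" "agree_except r' (N a) (N b)"
      using linked[OF r'] by blast
    then have "agreeing_pairs \<tau> N r' \<noteq> {}" using agreeing_pairs_min_max by blast
    then show ?thesis using fin by (simp add: Suc_le_eq card_gt_0_iff)
  qed
  have "1 < card (agreeing_pairs \<tau> N r)" using ge1[OF assms(4)] \<open>card _ \<noteq> 1\<close> by linarith
  then have "(\<Sum>r\<in>R. 1) < (\<Sum>r\<in>R. card (agreeing_pairs \<tau> N r))"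
    using ge1 assms(1,4) by (intro sum_strict_mono_ex1) auto
  then have "card R < (\<Sum>r\<in>R. card (agreeing_pairs \<tau> N r))" by simp
  moreover have "0 < card (classes R)"
    using assms(2) finite_\<tau> by (simp add: card_gt_0_iff del: image_is_empty) auto
  moreover have "card (classes R) + (\<Sum>r\<in>R. card (agreeing_pairs \<tau> N r)) \<le> Suc (card R)"
    using card_classes_add_sum_le[OF \<open>finite R\<close>] assms(2) by simp
  ultimately show False by linarith
qed

lemma agreeing_pair_unique:
  assumes "finite R" "card \<tau> = Suc (card R)"
    and linked: "\<And>r. r \<in> R \<Longrightarrow> \<exists>a\<in>\<tau>. \<exists>b\<in>\<tau>. a \<noteq> b \<and> agree_except r (N a) (N b)"
    and "r \<in> R"
    and "a \<in> \<tau>" "b \<in> \<tau>" "a \<noteq> b" "agree_except r (N a) (N b)"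
    and "a' \<in> \<tau>" "b' \<in> \<tau>" "a' \<noteq> b'" "agree_except r (N a') (N b')"
  shows "{a, b} = {a', b'}"
proof -
  obtain p where "agreeing_pairs \<tau> N r = {p}"
    using card_agreeing_pairs_eq_1[OF assms(1-4)] by (rule card_1_singletonE)
  then have "(min a b, max a b) = (min a' b', max a' b')"
    using agreeing_pairs_min_max[OF assms(5-8)] agreeing_pairs_min_max[OF assms(9-12)] by simp
  then show ?thesis by (auto simp: min_def max_def split: if_splits)
qed

end

lemma linkageD:
  assumes "linkage n d M" "\<tau> \<subseteq> {..<n}" "card \<tau> = d + 1" "r < d"
  shows "\<exists>a\<in>\<tau>. \<exists>b\<in>\<tau>. a \<noteq> b \<and> agree_except r (M (\<tau> - {a})) (M (\<tau> - {b}))"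
  using assms unfolding linkage_def by blast

lemma matching_field_deletion_matchings:
  assumes "matching_field n d M" "\<tau> \<subseteq> {..<n}" "card \<tau> = d + 1"
  shows "deletion_matchings \<tau> {..<d} (\<lambda>x. M (\<tau> - {x}))"
proof
  show "finite \<tau>" using assms(2) finite_subset by blast
  fix x assume "x \<in> \<tau>"
  then have "card (\<tau> - {x}) = d" using assms(3) \<open>finite \<tau>\<close> by simp
  then show "perfect_matching (\<tau> - {x}) {..<d} (M (\<tau> - {x}))"
    using assms(1,2) unfolding matching_field_def by blast
qed

lemma flip_graph_edgeI:
  assumes "matching_field n d M" "\<tau> \<subseteq> {..<n}" "card \<tau> = d + 1" "r < d"
    and "a \<in> \<tau>" "b \<in> \<tau>" "a \<noteq> b" "agree_except r (M (\<tau> - {a})) (M (\<tau> - {b}))"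
  shows "{M (\<tau> - {a}), M (\<tau> - {b})} \<in> flip_graph_edges n d M"
    and "flip_label {M (\<tau> - {a}), M (\<tau> - {b})} = (\<tau>, {r})"
proof -
  interpret deletion_matchings \<tau> "{..<d}" "\<lambda>x. M (\<tau> - {x})"
    using assms(1-3) by (rule matching_field_deletion_matchings)
  have pm: "perfect_matching (\<tau> - {a}) {..<d} (M (\<tau> - {a}))"
    "perfect_matching (\<tau> - {b}) {..<d} (M (\<tau> - {b}))"
    using perfect_matching_N assms(5,6) by simp_all
  have "\<tau> - {a} \<noteq> \<tau> - {b}" using assms(5-7) by blast
  then have neq: "M (\<tau> - {a}) \<noteq> M (\<tau> - {b})"
    using perfect_matching_fst_image[OF pm(1)] perfect_matching_fst_image[OF pm(2)] by metis
  have "card (\<tau> - {a}) = d" "card (\<tau> - {b}) = d" using assms(3,5,6) finite_\<tau> by simp_all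
  then show "{M (\<tau> - {a}), M (\<tau> - {b})} \<in> flip_graph_edges n d M"
    unfolding flip_graph_edges_def flip_graph_nodes_def flip_adjacent_def
    using assms(2,4,8) neq by blast
  have "(\<tau> - {a}) \<union> (\<tau> - {b}) = \<tau>" using assms(7) by blast
  then show "flip_label {M (\<tau> - {a}), M (\<tau> - {b})} = (\<tau>, {r})"
    using flip_label_adjacent[OF pm _ assms(8) neq] assms(4) by simp
qed

lemma flip_graph_edgeE:
  assumes "matching_field n d M" "e \<in> flip_graph_edges n d M"
  obtains \<tau> r a b where "\<tau> \<subseteq> {..<n}" "card \<tau> = d + 1" "r < d" "a \<in> \<tau>" "b \<in> \<tau>" "a \<noteq> b"
    "agree_except r (M (\<tau> - {a})) (M (\<tau> - {b}))" "e = {M (\<tau> - {a}), M (\<tau> - {b})}"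
proof -
  obtain \<sigma> \<sigma>' r where e: "e = {M \<sigma>, M \<sigma>'}" and \<sigma>: "\<sigma> \<subseteq> {..<n}" "card \<sigma> = d"
    and \<sigma>': "\<sigma>' \<subseteq> {..<n}" "card \<sigma>' = d"
    and neq: "M \<sigma> \<noteq> M \<sigma>'" and r: "r < d" and agree: "agree_except r (M \<sigma>) (M \<sigma>')"
    using assms(2) unfolding flip_graph_edges_def flip_graph_nodes_def flip_adjacent_def by blast
  have pm: "perfect_matching \<sigma> {..<d} (M \<sigma>)" "perfect_matching \<sigma>' {..<d} (M \<sigma>')"
    using assms(1) \<sigma> \<sigma>' unfolding matching_field_def by blast+
  obtain a b where ab: "a \<in> \<sigma>" "b \<notin> \<sigma>" "\<sigma>' = insert b (\<sigma> - {a})"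
    using adjacent_matchings_exchange[OF pm _ agree neq] r by blast
  define \<tau> where "\<tau> = insert b \<sigma>"
  have "\<sigma> = \<tau> - {b}" "\<sigma>' = \<tau> - {a}" "a \<noteq> b" using ab unfolding \<tau>_def by auto
  moreover have "card \<tau> = d + 1"
    using ab(2) \<sigma> finite_subset[OF \<sigma>(1)] unfolding \<tau>_def by simp
  moreover have "\<tau> \<subseteq> {..<n}" using \<sigma> \<sigma>' ab(3) unfolding \<tau>_def by blast
  ultimately show thesis
    using that[of \<tau> r b a] ab(1) agree e r unfolding \<tau>_def by auto
qed

lemma flip_label_image:
  assumes "matching_field n d M" "linkage n d M"
  shows "flip_label ` flip_graph_edges n d M
    = (\<lambda>(\<tau>, r). (\<tau>, {r})) ` ({\<tau>. \<tau> \<subseteq> {..<n} \<and> card \<tau> = d + 1} \<times> {..<d})"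
    (is "_ = ?label ` ?T")
proof (intro equalityI image_subsetI)
  fix e assume "e \<in> flip_graph_edges n d M"
  then obtain \<tau> r a b where \<tau>: "\<tau> \<subseteq> {..<n}" "card \<tau> = d + 1" "r < d"
    and ab: "a \<in> \<tau>" "b \<in> \<tau>" "a \<noteq> b" "agree_except r (M (\<tau> - {a})) (M (\<tau> - {b}))"
    and "e = {M (\<tau> - {a}), M (\<tau> - {b})}"
    using flip_graph_edgeE[OF assms(1)] by metis
  then have "flip_label e = ?label (\<tau>, r)" using flip_graph_edgeI(2)[OF assms(1) \<tau> ab] by simp
  then show "flip_label e \<in> ?label ` ?T" using \<tau> by auto
next
  fix p assume "p \<in> ?T"
  then obtain \<tau> r where "p = (\<tau>, r)" and \<tau>: "\<tau> \<subseteq> {..<n}" "card \<tau> = d + 1" "r < d" by auto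
  obtain a b where ab: "a \<in> \<tau>" "b \<in> \<tau>" "a \<noteq> b" "agree_except r (M (\<tau> - {a})) (M (\<tau> - {b}))"
    using linkageD[OF assms(2) \<tau>] by blast
  have "?label p = flip_label {M (\<tau> - {a}), M (\<tau> - {b})}"
    using flip_graph_edgeI(2)[OF assms(1) \<tau> ab] \<open>p = (\<tau>, r)\<close> by simp
  then show "?label p \<in> flip_label ` flip_graph_edges n d M"
    using flip_graph_edgeI(1)[OF assms(1) \<tau> ab] by (rule image_eqI)
qed

lemma inj_on_flip_label:
  assumes "matching_field n d M" "linkage n d M"
  shows "inj_on flip_label (flip_graph_edges n d M)"
proof (rule inj_onI)
  fix e e' assume "e \<in> flip_graph_edges n d M" "e' \<in> flip_graph_edges n d M"
    and label: "flip_label e = flip_label e'"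
  obtain \<tau> r a b where \<tau>: "\<tau> \<subseteq> {..<n}" "card \<tau> = d + 1" and "r < d"
    and ab: "a \<in> \<tau>" "b \<in> \<tau>" "a \<noteq> b" "agree_except r (M (\<tau> - {a})) (M (\<tau> - {b}))"
    and e: "e = {M (\<tau> - {a}), M (\<tau> - {b})}"
    using flip_graph_edgeE[OF assms(1) \<open>e \<in> _\<close>] by metis
  obtain \<tau>' r' a' b' where \<tau>': "\<tau>' \<subseteq> {..<n}" "card \<tau>' = d + 1" and "r' < d"
    and ab': "a' \<in> \<tau>'" "b' \<in> \<tau>'" "a' \<noteq> b'" "agree_except r' (M (\<tau>' - {a'})) (M (\<tau>' - {b'}))"
    and e': "e' = {M (\<tau>' - {a'}), M (\<tau>' - {b'})}"
    using flip_graph_edgeE[OF assms(1) \<open>e' \<in> _\<close>] by metis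
  have "\<tau>' = \<tau>" "r' = r"
    using label flip_graph_edgeI(2)[OF assms(1) \<tau> \<open>r < d\<close> ab]
      flip_graph_edgeI(2)[OF assms(1) \<tau>' \<open>r' < d\<close> ab']
    unfolding e e' by simp_all
  interpret deletion_matchings \<tau> "{..<d}" "\<lambda>x. M (\<tau> - {x})"
    using assms(1) \<tau> by (rule matching_field_deletion_matchings)
  have "{a, b} = {a', b'}"
  proof (rule agreeing_pair_unique)
    show "a' \<in> \<tau>" "b' \<in> \<tau>" "a' \<noteq> b'" "agree_except r (M (\<tau> - {a'})) (M (\<tau> - {b'}))"
      using ab' unfolding \<open>\<tau>' = \<tau>\<close> \<open>r' = r\<close> by simp_all
  qed (use ab \<tau> \<open>r < d\<close> linkageD[OF assms(2) \<tau>] in simp_all)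
  then have "(\<lambda>x. M (\<tau> - {x})) ` {a, b} = (\<lambda>x. M (\<tau> - {x})) ` {a', b'}" by simp
  then show "e = e'" unfolding e e' \<open>\<tau>' = \<tau>\<close> by simp
qed

theorem lemma3p38:
  fixes n d :: nat and M :: "nat set \<Rightarrow> (nat \<times> nat) set"
  assumes "d \<le> n"
    and "matching_field n d M"
    and "linkage n d M"
  shows "card (flip_graph_edges n d M) = (n choose (d + 1)) * d"
proof -
  let ?T = "{\<tau>. \<tau> \<subseteq> {..<n} \<and> card \<tau> = d + 1} \<times> {..<d}"
  have "card (flip_graph_edges n d M) = card (flip_label ` flip_graph_edges n d M)"
    using card_image[OF inj_on_flip_label[OF assms(2,3)]] by simp
  also have "\<dots> = card ((\<lambda>(\<tau>, r). (\<tau>, {r})) ` ?T)"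
    using flip_label_image[OF assms(2,3)] by simp
  also have "\<dots> = card ?T"
    by (rule card_image) (auto simp: inj_on_def)
  also have "\<dots> = (n choose (d + 1)) * d"
    using n_subsets[of "{..<n}" "d + 1"] by (simp add: card_cartesian_product)
  finally show ?thesis .
qed

end
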